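(* Let $\mathbb{F}$ be a field and $n\ge3$. Let $\mathcal{A}_n$ be the $n\times n$ znz-pattern whose nonzero entries are exactly the diagonal positions $(i,i)$ for $1\le i\le n$, the superdiagonal positions $(i,i+1)$ for $1\le i\le n-1$, and the position $(n,1)$. Then $\mathcal{A}_n$ is potentially nilpotent over $\mathbb{F}$ if and only if $\mathbb{F}$ contains all the $n$-th roots of unity.
   Context: A znz-pattern is an $n\times n$ matrix with entries in $\{*,0\}$; a realization over $\mathbb{F}$ is a matrix in $M_n(\mathbb{F})$ whose nonzero entries are exactly at the $*$ positions; potentially nilpotent over $\mathbb{F}$ means some realization is nilpotent. $\mathbb{F}$ contains all the $n$-th roots of unity if $x^n-1$ factors into $n$ linear factors over $\mathbb{F}$. *)

theory Defs
  imports "Jordan_Normal_Form.Matrix" "HOL-Computational_Algebra.Polynomial"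
begin

text \<open>A znz-pattern of size n is represented by a predicate on index pairs (0-based):
  P i j holds iff position (i,j) is a star.\<close>

definition realization :: "nat \<Rightarrow> (nat \<Rightarrow> nat \<Rightarrow> bool) \<Rightarrow> 'a::field mat \<Rightarrow> bool" where
  "realization n P A \<longleftrightarrow> A \<in> carrier_mat n n \<and>
     (\<forall>i<n. \<forall>j<n. A $$ (i, j) \<noteq> 0 \<longleftrightarrow> P i j)"

definition potentially_nilpotent :: "nat \<Rightarrow> (nat \<Rightarrow> nat \<Rightarrow> bool) \<Rightarrow> 'a::field itself \<Rightarrow> bool" where
  "potentially_nilpotent n P F \<longleftrightarrow>
     (\<exists>A :: 'a mat. realization n P A \<and> (\<exists>k. A ^\<^sub>m k = 0\<^sub>m n n))"

definition pattern_A :: "nat \<Rightarrow> nat \<Rightarrow> nat \<Rightarrow> bool" where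
  "pattern_A n i j \<longleftrightarrow> j = i \<or> j = i + 1 \<or> (i = n - 1 \<and> j = 0)"

definition contains_nth_roots_of_unity :: "'a::field itself \<Rightarrow> nat \<Rightarrow> bool" where
  "contains_nth_roots_of_unity F n \<longleftrightarrow>
     (\<exists>rs :: 'a list. length rs = n \<and> monom 1 n - 1 = (\<Prod>r\<leftarrow>rs. [:- r, 1:]))"

end

theory Submission
  imports Defs
begin

text \<open>
  Let A be an n x n matrix realizing the pattern (diagonal, superdiagonal and the
  corner (n-1, 0)) with diagonal d_0, ..., d_(n-1). Its graph is a single n-cycle plus loops, and
  (A - d_j I) maps the unit vector e_j to a nonzero multiple of e_(j-1) (indices mod n). Chasing
  e_(n-1) once around the cycle shows that the product of all factors (A - d_j I) is the scalar
  matrix K I, where K is the product of the n off-diagonal entries along the cycle.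

  If A is nilpotent, the monic polynomial (x - d_0)...(x - d_(n-1)) - K annihilates A; since
  A^(n-1) is nonzero, the only monic annihilator of degree n of a nilpotent A is x^n. Hence
  (x - d_0)...(x - d_(n-1)) = x^n + K, so K = -d_0^n and rescaling by d_0 splits x^n - 1.
  Conversely, if x^n - 1 = (x - r_0)...(x - r_(n-1)), the realization with diagonal r_i,
  superdiagonal 1 and corner -1 has K = -1, so A^n = (x^n - 1 + 1)(A) = 0.
\<close>

definition mat_poly_eval :: "nat \<Rightarrow> 'a::comm_ring_1 mat \<Rightarrow> 'a poly \<Rightarrow> 'a mat" where
  "mat_poly_eval n A p = foldr (\<lambda>a M. a \<cdot>\<^sub>m 1\<^sub>m n + A * M) (coeffs p) (0\<^sub>m n n)"

locale square_matrix =
  fixes n :: nat and A :: "'a::comm_ring_1 mat"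
  assumes A_carrier: "A \<in> carrier_mat n n"
begin

abbreviation ev :: "'a poly \<Rightarrow> 'a mat" where
  "ev p \<equiv> mat_poly_eval n A p"

lemma ev_carrier [simp]: "ev p \<in> carrier_mat n n"
proof -
  have "foldr (\<lambda>a M. a \<cdot>\<^sub>m 1\<^sub>m n + A * M) cs (0\<^sub>m n n) \<in> carrier_mat n n" for cs
    by (induct cs) (use A_carrier in auto)
  then show ?thesis unfolding mat_poly_eval_def .
qed

lemma ev_dim [simp]: "dim_row (ev p) = n" "dim_col (ev p) = n"
  using ev_carrier[of p] unfolding carrier_mat_def by auto

lemma ev_0 [simp]: "ev 0 = 0\<^sub>m n n"
  unfolding mat_poly_eval_def by simp

lemma ev_pCons: "ev (pCons a p) = a \<cdot>\<^sub>m 1\<^sub>m n + A * ev p"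
proof (cases "a = 0 \<and> p = 0")
  case True
  then show ?thesis using A_carrier by (auto intro!: eq_matI)
next
  case False
  then have "coeffs (pCons a p) = a # coeffs p" by (auto simp: cCons_def)
  then show ?thesis unfolding mat_poly_eval_def by simp
qed

lemma ev_const: "ev [:a:] = a \<cdot>\<^sub>m 1\<^sub>m n"
  using ev_pCons[of a 0] A_carrier by (auto intro!: eq_matI)

lemma ev_1: "ev 1 = 1\<^sub>m n"
  using ev_const[of 1] by (auto simp: one_pCons intro!: eq_matI)

lemma ev_linear: "ev [:a, 1:] = A + a \<cdot>\<^sub>m 1\<^sub>m n"
proof -
  have "A * ev [:1:] = A" using A_carrier by (simp add: ev_1[unfolded one_pCons])
  then show ?thesis using A_carrier by (simp add: ev_pCons) (intro eq_matI; auto)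
qed

lemma ev_add: "ev (p + q) = ev p + ev q"
proof (induct p q rule: poly_induct2)
  case 0
  then show ?case by (auto intro!: eq_matI)
next
  case (pCons a p b q)
  have "ev (pCons a p + pCons b q) = (a + b) \<cdot>\<^sub>m 1\<^sub>m n + A * (ev p + ev q)"
    by (simp add: ev_pCons pCons)
  also have "\<dots> = (a \<cdot>\<^sub>m 1\<^sub>m n + A * ev p) + (b \<cdot>\<^sub>m 1\<^sub>m n + A * ev q)"
    using A_carrier by (subst mult_add_distrib_mat[of A n n "ev p" n "ev q"])
      (auto intro!: eq_matI simp: algebra_simps)
  finally show ?case by (simp add: ev_pCons)
qed

lemma ev_smult: "ev (smult c p) = c \<cdot>\<^sub>m ev p"
proof (induct p)
  case 0
  then show ?case by (auto intro!: eq_matI)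
next
  case (pCons a p)
  have "ev (smult c (pCons a p)) = (c * a) \<cdot>\<^sub>m 1\<^sub>m n + A * (c \<cdot>\<^sub>m ev p)"
    by (simp add: ev_pCons pCons)
  also have "\<dots> = c \<cdot>\<^sub>m (a \<cdot>\<^sub>m 1\<^sub>m n + A * ev p)"
    using A_carrier by (subst mult_smult_distrib[of A n n "ev p" n])
      (auto intro!: eq_matI simp: algebra_simps)
  finally show ?case by (simp add: ev_pCons)
qed

lemma ev_mult: "ev (p * q) = ev p * ev q"
proof (induct p)
  case 0
  then show ?case by (simp add: left_mult_zero_mat[OF ev_carrier])
next
  case (pCons a p)
  have "ev (pCons a p * q) = a \<cdot>\<^sub>m ev q + A * (ev p * ev q)"
    using A_carrier by (simp add: ev_add ev_smult ev_pCons pCons)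
      (intro eq_matI; auto)
  also have "\<dots> = (a \<cdot>\<^sub>m 1\<^sub>m n + A * ev p) * ev q"
    using A_carrier by (simp add: add_mult_distrib_mat[of _ n n _ "ev q" n]
      mult_smult_assoc_mat[of _ n n _ n] assoc_mult_mat[of A n n "ev p" n "ev q" n])
  finally show ?case by (simp add: ev_pCons)
qed

lemma ev_comm: "ev p * ev q = ev q * ev p"
  by (metis ev_mult mult.commute)

lemma ev_monom: "ev (monom 1 m) = A ^\<^sub>m m"
proof (induct m)
  case 0
  then show ?case using A_carrier ev_1 by (simp add: one_pCons)
next
  case (Suc m)
  have "ev (monom 1 1) = A"
    using ev_linear[of 0] A_carrier by (auto simp: monom_Suc one_pCons intro!: eq_matI)
  moreover have "monom 1 (Suc m) = (monom 1 m * monom 1 1 :: 'a poly)"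
    unfolding mult_monom by simp
  ultimately show ?case using Suc by (simp add: ev_mult)
qed

lemma pow_comm: "A ^\<^sub>m j * ev p = ev p * A ^\<^sub>m j"
  by (metis ev_monom ev_comm)

lemma pow_add: "A ^\<^sub>m (i + j) = A ^\<^sub>m i * A ^\<^sub>m j"
  by (metis ev_monom ev_mult mult_monom mult_1)

lemma pow_Suc_left: "A ^\<^sub>m Suc t = A * A ^\<^sub>m t"
  using pow_add[of 1 t] A_carrier by simp

end

lemma smult_mat_zero_cancel:
  fixes B :: "'a::idom mat"
  assumes "B \<in> carrier_mat n m" "c \<noteq> 0" "c \<cdot>\<^sub>m B = 0\<^sub>m n m"
  shows "B = 0\<^sub>m n m"
proof (rule eq_matI)
  fix i j assume "i < dim_row (0\<^sub>m n m)" "j < dim_col (0\<^sub>m n m)"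
  then have "c * B $$ (i, j) = (c \<cdot>\<^sub>m B) $$ (i, j)" using assms(1) by auto
  then have "c * B $$ (i, j) = 0" using assms(3) \<open>i < _\<close> \<open>j < _\<close> by simp
  then show "B $$ (i, j) = 0\<^sub>m n m $$ (i, j)" using assms(2) \<open>i < _\<close> \<open>j < _\<close> by simp
qed (use assms in auto)

lemma smult_vec_cancel:
  fixes v w :: "'a::idom vec"
  assumes "c \<cdot>\<^sub>v v = c \<cdot>\<^sub>v w" "c \<noteq> 0" "v \<in> carrier_vec n" "w \<in> carrier_vec n"
  shows "v = w"
proof (rule eq_vecI)
  fix i assume "i < dim_vec w"
  then have "c * v $ i = c * w $ i"
    using assms(3,4) arg_cong[OF assms(1), of "\<lambda>u. u $ i"] by simp
  then show "v $ i = w $ i" using assms(2) by simp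
qed (use assms in simp)

locale nilpotent_matrix = square_matrix n A for n and A :: "'a::idom mat" +
  fixes k :: nat
  assumes nilpotent: "A ^\<^sub>m k = 0\<^sub>m n n"
begin

text \<open>If u has nonzero constant term then u(A) is not a zero divisor: from B u(A) = 0 one gets
  B A^j = 0 for j = k, k-1, ..., 0 by downward induction.\<close>
lemma cancel_unit_factor:
  assumes B: "B \<in> carrier_mat n n" and Bu: "B * ev u = 0\<^sub>m n n" and u0: "coeff u 0 \<noteq> 0"
  shows "B = 0\<^sub>m n n"
proof -
  obtain a w where u: "u = pCons a w" by (cases u)
  have a: "a \<noteq> 0" using u0 u by simp
  have step: "B * A ^\<^sub>m j = 0\<^sub>m n n" if IH: "B * A ^\<^sub>m Suc j = 0\<^sub>m n n" for j
  proof -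
    have Aj: "A ^\<^sub>m j \<in> carrier_mat n n" using A_carrier by simp
    have "B * A ^\<^sub>m j * ev u = (B * ev u) * A ^\<^sub>m j"
      using B Aj by (simp add: assoc_mult_mat[of B n n _ n _ n] pow_comm)
    then have "B * A ^\<^sub>m j * ev u = 0\<^sub>m n n" using Bu Aj by (simp add: left_mult_zero_mat)
    moreover have "B * A ^\<^sub>m j * ev u = a \<cdot>\<^sub>m (B * A ^\<^sub>m j) + (B * A ^\<^sub>m j * A) * ev w"
      unfolding u ev_pCons using B Aj A_carrier
      by (simp add: mult_add_distrib_mat[of _ n n _ n] mult_smult_distrib[of _ n n _ n]
        assoc_mult_mat[of "B * A ^\<^sub>m j" n n A n "ev w" n])
    moreover have "B * A ^\<^sub>m j * A = B * A ^\<^sub>m Suc j"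
      using B Aj A_carrier by (simp add: assoc_mult_mat[of B n n _ n A n])
    ultimately have "a \<cdot>\<^sub>m (B * A ^\<^sub>m j) = 0\<^sub>m n n"
      using IH B Aj by simp
    then show ?thesis using smult_mat_zero_cancel[OF _ a] B Aj by simp
  qed
  have "B * A ^\<^sub>m (k - i) = 0\<^sub>m n n" for i
  proof (induct i)
    case 0
    then show ?case using nilpotent B by simp
  next
    case (Suc i)
    then show ?case
      by (cases "i < k") (auto intro: step simp: Suc_diff_Suc)
  qed
  from this[of k] show ?thesis using B A_carrier by simp
qed

text \<open>If A^(n-1) is nonzero, the only monic polynomial of degree n annihilating A is x^n:
  write h = x^m q with q(0) nonzero; cancelling q(A) gives A^m = 0, forcing m = n.\<close>
lemma monic_annihilator_eq_monom:
  assumes not_zero: "A ^\<^sub>m (n - 1) \<noteq> 0\<^sub>m n n"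
    and deg: "degree h = n" and monic: "lead_coeff h = 1" and ann: "ev h = 0\<^sub>m n n"
  shows "h = monom 1 n"
proof -
  have "h \<noteq> 0" using monic by auto
  then obtain q where "h = [:-0, 1:] ^ order 0 h * q" and "\<not> [:-0, 1:] dvd q"
    using order_decomp by blast
  define m where "m = order 0 h"
  have h: "h = monom 1 m * q"
    using \<open>h = _ * q\<close> unfolding m_def by (simp add: monom_altdef)
  have q0: "coeff q 0 \<noteq> 0"
    using \<open>\<not> _ dvd q\<close> by (simp add: dvd_iff_poly_eq_0 poly_0_coeff_0)
  have "A ^\<^sub>m m * ev q = 0\<^sub>m n n" using ann h by (simp add: ev_mult ev_monom)
  then have Am: "A ^\<^sub>m m = 0\<^sub>m n n"
    using cancel_unit_factor[OF _ _ q0] A_carrier by simp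
  have "\<not> m < n"
  proof
    assume "m < n"
    then have "A ^\<^sub>m (n - 1) = A ^\<^sub>m m * A ^\<^sub>m (n - 1 - m)"
      using pow_add[of m "n - 1 - m"] by simp
    also have "\<dots> = 0\<^sub>m n n"
      unfolding Am using A_carrier by (simp add: left_mult_zero_mat)
    finally show False using not_zero by contradiction
  qed
  moreover have "degree h = m + degree q"
    unfolding h using q0 by (subst degree_mult_eq) (auto simp: degree_monom_eq)
  ultimately have "m = n" "degree q = 0" using deg by auto
  then obtain c where q: "q = [:c:]" using degree_eq_zeroE by blast
  then have "c = 1" using monic h \<open>m = n\<close> deg by (simp add: coeff_monom_mult)
  then show ?thesis using h q \<open>m = n\<close> by (simp add: one_pCons[symmetric])
qed

end

definition poly_of_roots :: "'a::comm_ring_1 list \<Rightarrow> 'a poly" where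
  "poly_of_roots rs = (\<Prod>r\<leftarrow>rs. [:- r, 1:])"

lemma poly_of_roots_Nil [simp]: "poly_of_roots [] = 1"
  by (simp add: poly_of_roots_def)

lemma poly_of_roots_Cons: "poly_of_roots (r # rs) = [:- r, 1:] * poly_of_roots rs"
  by (simp add: poly_of_roots_def)

lemma poly_of_roots_root: "r \<in> set rs \<Longrightarrow> poly (poly_of_roots rs) r = 0"
  by (induct rs) (auto simp: poly_of_roots_Cons)

lemma poly_of_roots_monic:
  "degree (poly_of_roots (rs :: 'a::idom list)) = length rs \<and> lead_coeff (poly_of_roots rs) = 1"
proof (induct rs)
  case (Cons r rs)
  then have "poly_of_roots rs \<noteq> 0" by auto
  then have "degree (poly_of_roots (r # rs)) = degree [:- r, 1:] + degree (poly_of_roots rs)"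
    by (simp only: poly_of_roots_Cons) (rule degree_mult_eq; simp)
  moreover have "lead_coeff (poly_of_roots (r # rs)) = lead_coeff (poly_of_roots rs)"
    by (simp only: poly_of_roots_Cons lead_coeff_mult) simp
  moreover have "lead_coeff (poly_of_roots rs) = 1" using Cons by (elim conjE) simp
  ultimately show ?case using Cons by simp
qed simp

lemma poly_of_roots_rescale:
  assumes "(c :: 'a::field) \<noteq> 0"
  shows "pcompose (poly_of_roots rs) [:0, c:] = smult (c ^ length rs) (poly_of_roots (map (\<lambda>r. r / c) rs))"
proof (induct rs)
  case Nil
  then show ?case by (simp add: pcompose_1)
next
  case (Cons r rs)
  have "pcompose [:- r, 1:] [:0, c:] = smult c [:- (r / c), 1:]"
    using assms by (simp add: pcompose_pCons pcompose_1)
  then have "pcompose (poly_of_roots (r # rs)) [:0, c:]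
      = smult c [:- (r / c), 1:] * smult (c ^ length rs) (poly_of_roots (map (\<lambda>r. r / c) rs))"
    by (simp only: poly_of_roots_Cons pcompose_mult Cons)
  then show ?case
    by (simp only: mult_smult_left mult_smult_right smult_smult poly_of_roots_Cons
        list.map length_Cons power_Suc mult.commute)
qed

locale pattern_A_matrix = square_matrix n A for n and A :: "'a::field mat" +
  assumes two_le_n: "2 \<le> n"
    and realizes: "\<And>i j. i < n \<Longrightarrow> j < n \<Longrightarrow> A $$ (i, j) \<noteq> 0 \<longleftrightarrow> pattern_A n i j"
begin

abbreviation e :: "nat \<Rightarrow> 'a vec" where
  "e j \<equiv> unit_vec n j"

text \<open>Cyclic predecessor: in column j the only off-diagonal nonzero entry sits in row cpred j.\<close>
definition cpred :: "nat \<Rightarrow> nat" where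
  "cpred j = (if j = 0 then n - 1 else j - 1)"

abbreviation diag :: "'a list" where
  "diag \<equiv> map (\<lambda>i. A $$ (i, i)) [0..<n]"

abbreviation chain_prod :: "nat \<Rightarrow> 'a" where
  "chain_prod t \<equiv> \<Prod>i\<in>{n - 1 - t..<n - 1}. A $$ (i, Suc i)"

abbreviation cycle_prod :: 'a where
  "cycle_prod \<equiv> A $$ (n - 1, 0) * chain_prod (n - 1)"

lemma cpred_less: "j < n \<Longrightarrow> cpred j < n"
  by (auto simp: cpred_def)

lemma cpred_neq: "j < n \<Longrightarrow> cpred j \<noteq> j"
  using two_le_n by (auto simp: cpred_def)

lemma column_support: "i < n \<Longrightarrow> j < n \<Longrightarrow> A $$ (i, j) \<noteq> 0 \<Longrightarrow> i = j \<or> i = cpred j"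
  using realizes two_le_n by (auto simp: pattern_A_def cpred_def)

lemma row_support: "i < n - 1 \<Longrightarrow> k < n \<Longrightarrow> A $$ (i, k) \<noteq> 0 \<Longrightarrow> k = i \<or> k = Suc i"
  using realizes by (auto simp: pattern_A_def)

lemma diag_nonzero: "i < n \<Longrightarrow> A $$ (i, i) \<noteq> 0"
  using realizes by (simp add: pattern_A_def)

lemma chain_prod_nonzero: "chain_prod t \<noteq> 0"
proof -
  have "A $$ (i, Suc i) \<noteq> 0" if "i < n - 1" for i
    using realizes[of i "Suc i"] that by (simp add: pattern_A_def)
  then show ?thesis by simp
qed

lemma factor_shift:
  assumes j: "j < n"
  shows "ev [:- A $$ (j, j), 1:] *\<^sub>v e j = A $$ (cpred j, j) \<cdot>\<^sub>v e (cpred j)"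
proof (rule eq_vecI)
  fix i assume "i < dim_vec (A $$ (cpred j, j) \<cdot>\<^sub>v e (cpred j))"
  then have i: "i < n" by simp
  have "(ev [:- A $$ (j, j), 1:] *\<^sub>v e j) $ i = A $$ (i, j) - (if i = j then A $$ (j, j) else 0)"
    using i j A_carrier by (simp add: ev_linear)
  also have "\<dots> = (if i = cpred j then A $$ (cpred j, j) else 0)"
    using column_support[OF i j] cpred_neq[OF j] by auto
  finally show "(ev [:- A $$ (j, j), 1:] *\<^sub>v e j) $ i = (A $$ (cpred j, j) \<cdot>\<^sub>v e (cpred j)) $ i"
    using i cpred_less[OF j] by simp
qed (use A_carrier in simp)

lemma factor_step:
  assumes j: "j < n" and p: "ev p *\<^sub>v e (n - 1) = c \<cdot>\<^sub>v e j"
  shows "ev ([:- A $$ (j, j), 1:] * p) *\<^sub>v e (n - 1) = (A $$ (cpred j, j) * c) \<cdot>\<^sub>v e (cpred j)"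
proof -
  have "ev ([:- A $$ (j, j), 1:] * p) *\<^sub>v e (n - 1) = ev [:- A $$ (j, j), 1:] *\<^sub>v (c \<cdot>\<^sub>v e j)"
    unfolding ev_mult p[symmetric] by (rule assoc_mult_mat_vec[of _ n n _ n]) auto
  also have "\<dots> = c \<cdot>\<^sub>v (A $$ (cpred j, j) \<cdot>\<^sub>v e (cpred j))"
    by (simp add: mult_mat_vec[of _ n n] factor_shift[OF j])
  finally show ?thesis by (auto intro!: eq_vecI)
qed

lemma diag_drop: "j < n \<Longrightarrow> drop j diag = A $$ (j, j) # drop (Suc j) diag"
  by (simp add: Cons_nth_drop_Suc[symmetric])

lemma tail_factors_eval:
  "t < n \<Longrightarrow> ev (poly_of_roots (drop (n - t) diag)) *\<^sub>v e (n - 1) = chain_prod t \<cdot>\<^sub>v e (n - 1 - t)"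
proof (induct t)
  case 0
  then show ?case using A_carrier by (auto simp: ev_1 intro!: eq_vecI)
next
  case (Suc t)
  define j where "j = n - Suc t"
  have j: "0 < j" "j < n" "Suc j = n - t" "n - 1 - t = j" "cpred j = n - 1 - Suc t"
    using Suc.prems unfolding j_def cpred_def by auto
  have "chain_prod (Suc t) = A $$ (cpred j, j) * chain_prod t"
    using prod.atLeast_Suc_lessThan[of "n - 1 - Suc t" "n - 1" "\<lambda>i. A $$ (i, Suc i)"] j
    by (simp add: Suc_diff_Suc)
  moreover have "drop (n - Suc t) diag = A $$ (j, j) # drop (n - t) diag"
    using diag_drop[of j] j unfolding j_def by simp
  ultimately show ?case
    using factor_step[of j "poly_of_roots (drop (n - t) diag)"] Suc j
    by (simp add: poly_of_roots_Cons)
qed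

lemma diag_factors_last_col: "ev (poly_of_roots diag) *\<^sub>v e (n - 1) = cycle_prod \<cdot>\<^sub>v e (n - 1)"
proof -
  have "0 < n" using two_le_n by simp
  have "poly_of_roots diag = poly_of_roots (A $$ (0, 0) # drop (n - (n - 1)) diag)"
    using diag_drop[of 0] \<open>0 < n\<close> by simp
  also have "\<dots> = [:- A $$ (0, 0), 1:] * poly_of_roots (drop (n - (n - 1)) diag)"
    by (rule poly_of_roots_Cons)
  finally have "poly_of_roots diag = \<dots>" .
  moreover have "ev (poly_of_roots (drop (n - (n - 1)) diag)) *\<^sub>v e (n - 1) = chain_prod (n - 1) \<cdot>\<^sub>v e 0"
    using tail_factors_eval[of "n - 1"] \<open>0 < n\<close> by simp
  ultimately show ?thesis
    using factor_step[OF \<open>0 < n\<close>] by (simp add: cpred_def)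
qed

text \<open>Every column: since the polynomials in A commute, the identity for e_(n-1) transfers to
  e_j = (tail factors applied to e_(n-1)) / chain_prod.\<close>
lemma diag_factors_col:
  assumes j: "j < n"
  shows "ev (poly_of_roots diag) *\<^sub>v e j = cycle_prod \<cdot>\<^sub>v e j"
proof -
  define t where "t = n - 1 - j"
  let ?Q = "ev (poly_of_roots (drop (n - t) diag))" and ?G = "ev (poly_of_roots diag)"
  have Q: "?Q *\<^sub>v e (n - 1) = chain_prod t \<cdot>\<^sub>v e j"
    using tail_factors_eval[of t] j unfolding t_def by simp
  have "chain_prod t \<cdot>\<^sub>v (?G *\<^sub>v e j) = ?G *\<^sub>v (?Q *\<^sub>v e (n - 1))"
    unfolding Q by (rule mult_mat_vec[symmetric, of _ n n]) auto
  also have "\<dots> = (?G * ?Q) *\<^sub>v e (n - 1)"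
    by (rule assoc_mult_mat_vec[symmetric, of _ n n _ n]) auto
  also have "\<dots> = (?Q * ?G) *\<^sub>v e (n - 1)"
    by (rule arg_cong[where f = "\<lambda>M. M *\<^sub>v e (n - 1)"], rule ev_comm)
  also have "\<dots> = ?Q *\<^sub>v (?G *\<^sub>v e (n - 1))"
    by (rule assoc_mult_mat_vec[of _ n n _ n]) auto
  also have "\<dots> = chain_prod t \<cdot>\<^sub>v (cycle_prod \<cdot>\<^sub>v e j)"
    unfolding diag_factors_last_col mult_mat_vec[OF ev_carrier unit_vec_carrier] Q
    by (auto intro!: eq_vecI)
  finally have "chain_prod t \<cdot>\<^sub>v (?G *\<^sub>v e j) = chain_prod t \<cdot>\<^sub>v (cycle_prod \<cdot>\<^sub>v e j)" .
  then show ?thesis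
    by (rule smult_vec_cancel[OF _ chain_prod_nonzero]) (auto intro: mult_mat_vec_carrier[of _ n n])
qed

lemma diag_factors_eval: "ev (poly_of_roots diag) = cycle_prod \<cdot>\<^sub>m 1\<^sub>m n"
proof (rule eq_matI)
  fix i j assume "i < dim_row (cycle_prod \<cdot>\<^sub>m 1\<^sub>m n)" "j < dim_col (cycle_prod \<cdot>\<^sub>m 1\<^sub>m n)"
  then have ij: "i < n" "j < n" by auto
  have "ev (poly_of_roots diag) $$ (i, j) = (ev (poly_of_roots diag) *\<^sub>v e j) $ i"
    using ij by simp
  then show "ev (poly_of_roots diag) $$ (i, j) = (cycle_prod \<cdot>\<^sub>m 1\<^sub>m n) $$ (i, j)"
    using ij by (simp add: diag_factors_col)
qed auto

lemma row_eval:
  assumes i: "i < n - 1" and v: "v \<in> carrier_vec n"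
  shows "(A *\<^sub>v v) $ i = A $$ (i, i) * v $ i + A $$ (i, Suc i) * v $ Suc i"
proof -
  have "(A *\<^sub>v v) $ i = (\<Sum>k\<in>{0..<n}. A $$ (i, k) * v $ k)"
    using A_carrier v i by (simp add: scalar_prod_def)
  also have "\<dots> = (\<Sum>k\<in>{i, Suc i}. A $$ (i, k) * v $ k)"
  proof (rule sum.mono_neutral_right)
    show "\<forall>k\<in>{0..<n} - {i, Suc i}. A $$ (i, k) * v $ k = 0"
      using row_support[OF i] by fastforce
  qed (use i in auto)
  finally show ?thesis by simp
qed

lemma pow_last_col:
  assumes "t < n"
  shows "(\<forall>i < n - 1 - t. (A ^\<^sub>m t *\<^sub>v e (n - 1)) $ i = 0) \<and> (A ^\<^sub>m t *\<^sub>v e (n - 1)) $ (n - 1 - t) \<noteq> 0"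
  using assms
proof (induct t)
  case 0
  then show ?case using A_carrier by simp
next
  case (Suc t)
  let ?v = "A ^\<^sub>m t *\<^sub>v e (n - 1)"
  define m where "m = n - 1 - Suc t"
  have m: "Suc m = n - 1 - t" "m < n - 1" using Suc.prems unfolding m_def by auto
  have v: "?v \<in> carrier_vec n" by (rule mult_mat_vec_carrier[of _ n n]) (use A_carrier in auto)
  have IH: "\<And>i. i < Suc m \<Longrightarrow> ?v $ i = 0" "?v $ Suc m \<noteq> 0" using Suc m by auto
  have Av: "A ^\<^sub>m Suc t *\<^sub>v e (n - 1) = A *\<^sub>v ?v"
    unfolding pow_Suc_left by (rule assoc_mult_mat_vec[of _ n n _ n]) (use A_carrier in auto)
  have "(A *\<^sub>v ?v) $ i = 0" if "i < m" for i
    using row_eval[OF _ v, of i] IH that m by simp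
  moreover have "(A *\<^sub>v ?v) $ m \<noteq> 0"
    using row_eval[OF m(2) v] IH realizes[of m "Suc m"] m by (simp add: pattern_A_def)
  ultimately show ?case unfolding Av m_def by simp
qed

lemma pow_nonzero: "A ^\<^sub>m (n - 1) \<noteq> 0\<^sub>m n n"
proof
  assume "A ^\<^sub>m (n - 1) = 0\<^sub>m n n"
  then have "(A ^\<^sub>m (n - 1) *\<^sub>v e (n - 1)) $ 0 = 0" using two_le_n by simp
  then show False using pow_last_col[of "n - 1"] two_le_n by simp
qed

lemma nilpotent_diag_poly:
  assumes "A ^\<^sub>m k = 0\<^sub>m n n"
  shows "poly_of_roots diag = monom 1 n + [:cycle_prod:]"
proof -
  interpret nilpotent_matrix n A k by unfold_locales (rule assms)
  define h where "h = poly_of_roots diag + [:- cycle_prod:]"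
  have "degree (poly_of_roots diag) = n" "lead_coeff (poly_of_roots diag) = 1"
    using poly_of_roots_monic[of diag] by auto
  moreover have "0 < n" using two_le_n by simp
  ultimately have "degree h = n" "lead_coeff h = 1"
    unfolding h_def by (simp_all add: degree_add_eq_left coeff_pCons split: nat.split)
  moreover have "ev h = 0\<^sub>m n n"
    unfolding h_def ev_add diag_factors_eval ev_const by (auto intro!: eq_matI)
  ultimately have "h = monom 1 n"
    using monic_annihilator_eq_monom[OF pow_nonzero] by blast
  moreover have "poly_of_roots diag = h + [:cycle_prod:]"
    unfolding h_def by (simp add: add.assoc)
  ultimately show ?thesis by simp
qed

end

text \<open>If x^n + c splits with a nonzero root a, then c = -a^n and dividing the roots by a splits x^n - 1.\<close>
lemma roots_of_unity_from_binomial: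
  fixes ds :: "'a::field list"
  assumes ds: "poly_of_roots ds = monom 1 n + [:c:]" and len: "length ds = n"
    and a: "a \<in> set ds" "a \<noteq> 0"
  shows "contains_nth_roots_of_unity TYPE('a) n"
proof -
  have "0 < n" using a len by (cases ds) auto
  have "a ^ n + c = 0"
    using poly_of_roots_root[OF a(1)] unfolding ds by (simp add: poly_monom)
  then have c: "c = - (a ^ n)" by (simp add: eq_neg_iff_add_eq_0 add.commute)
  define rs where "rs = map (\<lambda>r. r / a) ds"
  have "smult (a ^ n) (poly_of_roots rs) = pcompose (poly_of_roots ds) [:0, a:]"
    unfolding rs_def poly_of_roots_rescale[OF a(2)] len ..
  also have "\<dots> = smult (a ^ n) (monom 1 n - 1)"
  proof (rule poly_eqI)
    fix i
    show "coeff (pcompose (poly_of_roots ds) [:0, a:]) i = coeff (smult (a ^ n) (monom 1 n - 1)) i"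
      unfolding coeff_pcompose_linear ds using c \<open>0 < n\<close>
      by (cases i) (auto simp: coeff_pCons split: nat.splits)
  qed
  finally have "poly_of_roots rs = monom 1 n - 1"
    using smult_cancel[of "a ^ n"] a(2) by simp
  moreover have "length rs = n" unfolding rs_def using len by simp
  ultimately show ?thesis
    unfolding contains_nth_roots_of_unity_def poly_of_roots_def by metis
qed

text \<open>Converse construction: diagonal the n-th roots of unity, superdiagonal 1, corner -1.\<close>
lemma pattern_A_nilpotent_realization:
  fixes rs :: "'a::field list"
  assumes n: "2 \<le> n" and len: "length rs = n" and rs: "monom 1 n - 1 = poly_of_roots rs"
  shows "potentially_nilpotent n (pattern_A n) TYPE('a)"
proof -
  have rs_nonzero: "rs ! i \<noteq> 0" if "i < n" for i
  proof
    assume "rs ! i = 0"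
    moreover have "poly (poly_of_roots rs) (rs ! i) = 0"
      using that len by (intro poly_of_roots_root) simp
    ultimately show False using n unfolding rs[symmetric] by (simp add: poly_monom power_0_left)
  qed
  define A :: "'a mat" where "A = mat n n (\<lambda>(i, j).
      if j = i then rs ! i else if j = Suc i then 1 else if i = n - 1 \<and> j = 0 then -1 else 0)"
  have A: "A \<in> carrier_mat n n" unfolding A_def by simp
  have pat: "A $$ (i, j) \<noteq> 0 \<longleftrightarrow> pattern_A n i j" if "i < n" "j < n" for i j
    using that rs_nonzero n unfolding A_def pattern_A_def by auto
  interpret pattern_A_matrix n A
    using A pat n by unfold_locales auto
  have "diag = rs" using len by (intro nth_equalityI) (auto simp: A_def)
  moreover have "cycle_prod = -1"
    using n by (simp add: A_def)
  ultimately have "ev (poly_of_roots rs) = (-1) \<cdot>\<^sub>m 1\<^sub>m n"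
    using diag_factors_eval by simp
  moreover have "monom 1 n = poly_of_roots rs + 1" using rs by (simp add: algebra_simps)
  ultimately have "A ^\<^sub>m n = 0\<^sub>m n n"
    by (simp flip: ev_monom add: ev_add ev_1) (auto intro!: eq_matI)
  then show ?thesis
    unfolding potentially_nilpotent_def realization_def using A pat by blast
qed

theorem theorem4p6:
  fixes n :: nat
  assumes "n \<ge> 3"
  shows "potentially_nilpotent n (pattern_A n) TYPE('a::field) \<longleftrightarrow>
         contains_nth_roots_of_unity TYPE('a) n"
proof
  assume "potentially_nilpotent n (pattern_A n) TYPE('a::field)"
  then obtain A :: "'a mat" and k where "realization n (pattern_A n) A" and nil: "A ^\<^sub>m k = 0\<^sub>m n n"
    unfolding potentially_nilpotent_def by blast
  then interpret pattern_A_matrix n A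
    using assms unfolding realization_def by unfold_locales auto
  show "contains_nth_roots_of_unity TYPE('a) n"
  proof (rule roots_of_unity_from_binomial[OF nilpotent_diag_poly[OF nil]])
    show "A $$ (0, 0) \<in> set diag" "A $$ (0, 0) \<noteq> 0"
      using diag_nonzero[of 0] assms by auto
  qed simp
next
  assume "contains_nth_roots_of_unity TYPE('a) n"
  then obtain rs :: "'a list" where "length rs = n" "monom 1 n - 1 = poly_of_roots rs"
    unfolding contains_nth_roots_of_unity_def poly_of_roots_def by blast
  then show "potentially_nilpotent n (pattern_A n) TYPE('a)"
    by (intro pattern_A_nilpotent_realization) (use assms in auto)
qed

end
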